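(* If $\mathbf{X}$ satisfies (A1), then for every $j\ge1$, $$W_j\le\lambda^{\max}\Big(M^{abs}_{T_j,\,T_{j+1}-1}+|U_{T_j}|\Big)\,I\{T_j<\infty\}\quad\text{a.e.},$$ where $T_{j+1}-1$ is interpreted as $\infty$ when $T_{j+1}=\infty$.
   Context: $\mathbf{X}=\{X_n\}_{n\ge0}$ is a real-valued integrable process adapted to a filtration $\{\mathcal{F}_n\}_{n\ge0}$; $\epsilon_n=X_n-E[X_n\mid\mathcal{F}_{n-1}]$, $n\ge1$; $U_n=E[X_n\mid\mathcal{F}_{n-1}]\,I\{X_{n-1}=0\}$. Events: $D^+_n=\{X_n>0\}$, $D^-_n=\{X_n<0\}$, $D^0_n=\{X_n=0\}$, and for $n\ge1$, $D_n=D^+_n(D^+_{n-1})^c\cup D^-_n(D^-_{n-1})^c\cup D^0_n(D^0_{n-1})^c$. For $j\ge1$, $T_j=\inf\{t\ge1:\sum_{i=1}^tI\{D_i\}\ge j\}$ ($\inf\emptyset=\infty$). $W_j=\sup_{T_j\le i<T_{j+1}}|X_i|$ if $T_j<\infty$ and $W_j=0$ if $T_j=\infty$. $M^{abs}_{s,t}=\sum_{i=s}^t|\epsilon_i|$ (allowing $t=\infty$, with value possibly $+\infty$). (A1) There are constants $\alpha_n\ge0$ with $\sum_n\alpha_n<\infty$ such that a.e., for all $n\ge1$: $0\le \frac{E[X_n\mid\mathcal{F}_{n-1}]}{X_{n-1}}I\{X_{n-1}\ne0\}\le 1+\alpha_n$. $\lambda^k_t=\prod_{i=t-k+1}^t(1+\alpha_i)$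 for $t,k\ge1$, $\lambda^0_t=1$, and $\lambda^{\max}=\sup_{t,k}\lambda^k_t$ (finite under (A1)). *)

theory Defs
  imports "HOL-Probability.Probability"
begin

definition cE :: "'a measure \<Rightarrow> (nat \<Rightarrow> 'a measure) \<Rightarrow> (nat \<Rightarrow> 'a \<Rightarrow> real) \<Rightarrow> nat \<Rightarrow> 'a \<Rightarrow> real" where
  "cE M F X n = real_cond_exp M (F (n - 1)) (X n)"

definition eps :: "'a measure \<Rightarrow> (nat \<Rightarrow> 'a measure) \<Rightarrow> (nat \<Rightarrow> 'a \<Rightarrow> real) \<Rightarrow> nat \<Rightarrow> 'a \<Rightarrow> real" where
  "eps M F X n \<omega> = X n \<omega> - cE M F X n \<omega>"

definition UU :: "'a measure \<Rightarrow> (nat \<Rightarrow> 'a measure) \<Rightarrow> (nat \<Rightarrow> 'a \<Rightarrow> real) \<Rightarrow> nat \<Rightarrow> 'a \<Rightarrow> real" where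
  "UU M F X n \<omega> = cE M F X n \<omega> * (if X (n - 1) \<omega> = 0 then 1 else 0)"

definition DD :: "(nat \<Rightarrow> 'a \<Rightarrow> real) \<Rightarrow> nat \<Rightarrow> 'a \<Rightarrow> bool" where
  "DD X n \<omega> =
     ((X n \<omega> > 0 \<and> \<not> X (n - 1) \<omega> > 0) \<or>
      (X n \<omega> < 0 \<and> \<not> X (n - 1) \<omega> < 0) \<or>
      (X n \<omega> = 0 \<and> \<not> X (n - 1) \<omega> = 0))"

definition cntD :: "(nat \<Rightarrow> 'a \<Rightarrow> real) \<Rightarrow> nat \<Rightarrow> 'a \<Rightarrow> nat" where
  "cntD X t \<omega> = card {i \<in> {1..t}. DD X i \<omega>}"

definition TT :: "(nat \<Rightarrow> 'a \<Rightarrow> real) \<Rightarrow> nat \<Rightarrow> 'a \<Rightarrow> enat" where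
  "TT X j \<omega> = (if \<exists>t\<ge>1. cntD X t \<omega> \<ge> j
               then enat (LEAST t. t \<ge> 1 \<and> cntD X t \<omega> \<ge> j) else \<infinity>)"

definition WW :: "(nat \<Rightarrow> 'a \<Rightarrow> real) \<Rightarrow> nat \<Rightarrow> 'a \<Rightarrow> ennreal" where
  "WW X j \<omega> = (if TT X j \<omega> < \<infinity>
      then (SUP i\<in>{i. TT X j \<omega> \<le> enat i \<and> enat i < TT X (Suc j) \<omega>}. ennreal \<bar>X i \<omega>\<bar>)
      else 0)"

definition Mabs :: "(nat \<Rightarrow> 'a \<Rightarrow> real) \<Rightarrow> nat \<Rightarrow> enat \<Rightarrow> 'a \<Rightarrow> ennreal" where
  "Mabs e s t \<omega> = (\<Sum>i. if s \<le> i \<and> enat i \<le> t then ennreal \<bar>e i \<omega>\<bar> else 0)"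

definition lam :: "(nat \<Rightarrow> real) \<Rightarrow> nat \<Rightarrow> nat \<Rightarrow> real" where
  "lam \<alpha> k t = (\<Prod>i\<in>{t + 1 - k..t}. 1 + \<alpha> i)"

definition lam_max :: "(nat \<Rightarrow> real) \<Rightarrow> ennreal" where
  "lam_max \<alpha> = (SUP p\<in>{(k, t). k \<le> t}. ennreal (lam \<alpha> (fst p) (snd p)))"

definition A1 :: "'a measure \<Rightarrow> (nat \<Rightarrow> 'a measure) \<Rightarrow> (nat \<Rightarrow> 'a \<Rightarrow> real) \<Rightarrow> (nat \<Rightarrow> real) \<Rightarrow> bool" where
  "A1 M F X \<alpha> \<longleftrightarrow> (\<forall>n. \<alpha> n \<ge> 0) \<and> summable \<alpha> \<and>
     (AE \<omega> in M. \<forall>n\<ge>1.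
        0 \<le> cE M F X n \<omega> / X (n - 1) \<omega> * (if X (n - 1) \<omega> \<noteq> 0 then 1 else 0) \<and>
        cE M F X n \<omega> / X (n - 1) \<omega> * (if X (n - 1) \<omega> \<noteq> 0 then 1 else 0) \<le> 1 + \<alpha> n)"

end

theory Submission
  imports Defs
begin

text \<open>Write \<open>X k = c k + \<epsilon> k\<close> with \<open>c k = E[X k | F (k - 1)]\<close>. Strictly between two
  consecutive sign changes, (A1) gives \<open>|c k| \<le> (1 + \<alpha> k) |X (k - 1)|\<close>, and a zero value
  stays zero, so \<open>|X k| \<le> (1 + \<alpha> k) |X (k - 1)| + |\<epsilon> k|\<close>. At the sign change \<open>T j\<close> itself,
  (A1) forces \<open>c\<close> to have the sign of \<open>X (T j - 1)\<close>, opposite to that of \<open>X (T j)\<close>, so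
  \<open>|X (T j)| \<le> |\<epsilon> (T j)|\<close> unless \<open>X (T j - 1) = 0\<close>, which is where \<open>U (T j)\<close> enters.
  Unrolling the recursion bounds \<open>|X i|\<close> by a product \<open>\<lambda>\<close> of factors \<open>1 + \<alpha> k\<close> times a
  partial sum of \<open>|\<epsilon> k|\<close>.\<close>

lemma abs_le_prod_mult_sum_of_recursion:
  fixes x e a :: "nat \<Rightarrow> real" and u :: real
  assumes "s \<le> i"
    and step: "\<And>k. s < k \<Longrightarrow> k \<le> i \<Longrightarrow> \<bar>x k\<bar> \<le> (1 + a k) * \<bar>x (k - 1)\<bar> + \<bar>e k\<bar>"
    and "\<bar>x s\<bar> \<le> u + \<bar>e s\<bar>"
    and "\<And>k. a k \<ge> 0" and "u \<ge> 0"
  shows "\<bar>x i\<bar> \<le> (\<Prod>k\<in>{s+1..i}. 1 + a k) * ((\<Sum>k\<in>{s..i}. \<bar>e k\<bar>) + u)"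
  using assms(1) step
proof (induction i rule: dec_induct)
  case base
  then show ?case using assms(3) by simp
next
  case (step i)
  define P where "P = (\<Prod>k\<in>{s+1..i}. 1 + a k)"
  define S where "S = (\<Sum>k\<in>{s..i}. \<bar>e k\<bar>) + u"
  have P_ge_1: "P \<ge> 1" unfolding P_def using assms(4) by (intro prod_ge_1) auto
  have IH: "\<bar>x i\<bar> \<le> P * S" using step P_def S_def by auto
  have "\<bar>x (Suc i)\<bar> \<le> (1 + a (Suc i)) * \<bar>x i\<bar> + \<bar>e (Suc i)\<bar>"
    using step by (metis diff_Suc_1 le_imp_less_Suc order_refl)
  also have "\<dots> \<le> (1 + a (Suc i)) * (P * S) + (1 + a (Suc i)) * P * \<bar>e (Suc i)\<bar>"
  proof (intro add_mono mult_left_mono)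
    have "1 \<le> (1 + a (Suc i)) * P"
      using P_ge_1 assms(4)[of "Suc i"] by (metis le_add_same_cancel1 mult_mono' mult_1 zero_le_one order_trans)
    then show "\<bar>e (Suc i)\<bar> \<le> (1 + a (Suc i)) * P * \<bar>e (Suc i)\<bar>"
      using mult_right_mono[of 1 _ "\<bar>e (Suc i)\<bar>"] by simp
  qed (use IH assms(4)[of "Suc i"] in auto)
  also have "\<dots> = ((1 + a (Suc i)) * P) * (S + \<bar>e (Suc i)\<bar>)"
    by (simp add: algebra_simps)
  also have "(1 + a (Suc i)) * P = (\<Prod>k\<in>{s+1..Suc i}. 1 + a k)"
    unfolding P_def using step(1) by (subst prod.nat_ivl_Suc') auto
  also have "S + \<bar>e (Suc i)\<bar> = (\<Sum>k\<in>{s..Suc i}. \<bar>e k\<bar>) + u"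
    unfolding S_def using step(1) by (subst sum.nat_ivl_Suc') auto
  finally show ?case .
qed

lemma cond_mean_bounds_of_ratio_bounds:
  fixes c y b :: real
  assumes "y \<noteq> 0" "0 \<le> c / y" "c / y \<le> b"
  shows "\<bar>c\<bar> \<le> b * \<bar>y\<bar>" and "0 \<le> c * y"
proof -
  have c_eq: "c = (c / y) * y" using assms(1) by simp
  have "\<bar>c\<bar> = (c / y) * \<bar>y\<bar>" using assms(2) c_eq by (metis abs_mult abs_of_nonneg)
  also have "\<dots> \<le> b * \<bar>y\<bar>" using assms(3) by (intro mult_right_mono) auto
  finally show "\<bar>c\<bar> \<le> b * \<bar>y\<bar>" .
  show "0 \<le> c * y" using assms(2) by (simp add: zero_le_divide_iff zero_le_mult_iff)
qed

lemma abs_le_of_not_DD: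
  fixes c b :: real
  assumes "\<not> DD X k \<omega>" "0 \<le> b"
    and "X (k - 1) \<omega> \<noteq> 0 \<Longrightarrow> \<bar>c\<bar> \<le> b * \<bar>X (k - 1) \<omega>\<bar>"
  shows "\<bar>X k \<omega>\<bar> \<le> b * \<bar>X (k - 1) \<omega>\<bar> + \<bar>X k \<omega> - c\<bar>"
proof (cases "X (k - 1) \<omega> = 0")
  case True
  then have "X k \<omega> = 0" using assms(1) unfolding DD_def by auto
  then show ?thesis using assms(2) by simp
next
  case False
  then show ?thesis using assms(3) by linarith
qed

lemma abs_le_at_DD:
  fixes c :: real
  assumes "DD X s \<omega>" and "X (s - 1) \<omega> \<noteq> 0 \<Longrightarrow> 0 \<le> c * X (s - 1) \<omega>"
  shows "\<bar>X s \<omega>\<bar> \<le> \<bar>c * (if X (s - 1) \<omega> = 0 then 1 else 0)\<bar> + \<bar>X s \<omega> - c\<bar>"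
proof (cases "X (s - 1) \<omega> = 0")
  case False
  then have "0 \<le> c * X (s - 1) \<omega>" using assms(2) by blast
  with assms(1) False show ?thesis
    unfolding DD_def by (auto simp: zero_le_mult_iff)
qed simp

lemma cntD_Suc: "cntD X (Suc t) \<omega> = cntD X t \<omega> + (if DD X (Suc t) \<omega> then 1 else 0)"
proof -
  have "{i \<in> {1..Suc t}. DD X i \<omega>} =
      {i \<in> {1..t}. DD X i \<omega>} \<union> (if DD X (Suc t) \<omega> then {Suc t} else {})"
    by (auto simp: le_Suc_eq)
  then show ?thesis unfolding cntD_def by (auto simp: card_insert_if)
qed

lemma cntD_mono: "t \<le> t' \<Longrightarrow> cntD X t \<omega> \<le> cntD X t' \<omega>"
  unfolding cntD_def by (intro card_mono) auto

lemma TT_le_enat: "1 \<le> t \<Longrightarrow> j \<le> cntD X t \<omega> \<Longrightarrow> TT X j \<omega> \<le> enat t"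
  unfolding TT_def by (auto intro: Least_le)

lemma TT_eq_enatD:
  assumes "TT X j \<omega> = enat s" "j \<ge> 1"
  shows "s \<ge> 1" "j \<le> cntD X s \<omega>" "DD X s \<omega>"
proof -
  have ex: "\<exists>t\<ge>1. j \<le> cntD X t \<omega>" using assms(1) unfolding TT_def by (auto split: if_splits)
  then have s_def: "s = (LEAST t. t \<ge> 1 \<and> j \<le> cntD X t \<omega>)"
    using assms(1) unfolding TT_def by auto
  have "s \<ge> 1 \<and> j \<le> cntD X s \<omega>"
    unfolding s_def by (rule LeastI_ex) (use ex in blast)
  then show s1: "s \<ge> 1" and js: "j \<le> cntD X s \<omega>" by auto
  have "cntD X (s - 1) \<omega> < j"
  proof (cases "s = 1")
    case True
    then show ?thesis using assms(2) by (simp add: cntD_def)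
  next
    case False
    show ?thesis
    proof (rule ccontr)
      assume "\<not> cntD X (s - 1) \<omega> < j"
      then have "(LEAST t. t \<ge> 1 \<and> j \<le> cntD X t \<omega>) \<le> s - 1"
        using False s1 by (intro Least_le) auto
      with s_def s1 show False by simp
    qed
  qed
  then show "DD X s \<omega>" using js cntD_Suc[of X "s - 1" \<omega>] s1 by (auto split: if_splits)
qed

lemma not_DD_before_next_TT:
  assumes "TT X j \<omega> = enat s" "j \<ge> 1" "s < i" "enat i < TT X (Suc j) \<omega>"
  shows "\<not> DD X i \<omega>"
proof
  assume "DD X i \<omega>"
  then have "cntD X i \<omega> = cntD X (i - 1) \<omega> + 1"
    using cntD_Suc[of X "i - 1" \<omega>] assms(3) by simp
  moreover have "cntD X s \<omega> \<le> cntD X (i - 1) \<omega>" using assms(3) by (intro cntD_mono) auto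
  ultimately have "Suc j \<le> cntD X i \<omega>" using TT_eq_enatD(2)[OF assms(1,2)] by simp
  then have "TT X (Suc j) \<omega> \<le> enat i" using assms(3) by (intro TT_le_enat) auto
  with assms(4) show False by simp
qed

lemma lam_le_lam_max: "k \<le> t \<Longrightarrow> ennreal (lam \<alpha> k t) \<le> lam_max \<alpha>"
  unfolding lam_max_def by (rule SUP_upper2[of "(k, t)"]) auto

lemma sum_abs_le_Mabs:
  assumes "enat i \<le> T"
  shows "ennreal (\<Sum>k\<in>{s..i}. \<bar>e k \<omega>\<bar>) \<le> Mabs e s T \<omega>"
proof -
  have "ennreal (\<Sum>k\<in>{s..i}. \<bar>e k \<omega>\<bar>) = (\<Sum>k\<in>{s..i}. ennreal \<bar>e k \<omega>\<bar>)"
    by simp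
  also have "\<dots> = (\<Sum>k\<in>{s..i}. if s \<le> k \<and> enat k \<le> T then ennreal \<bar>e k \<omega>\<bar> else 0)"
    using assms by (intro sum.cong) (auto intro: order_trans[of _ "enat i"])
  also have "\<dots> \<le> Mabs e s T \<omega>"
    unfolding Mabs_def by (intro sum_le_suminf summableI) auto
  finally show ?thesis .
qed

lemma enat_le_minus_one_of_less: "enat i < T \<Longrightarrow> enat i \<le> T - 1"
  by (cases T) (auto simp: enat_1[symmetric])

definition cE_ratio_bounded ::
    "'a measure \<Rightarrow> (nat \<Rightarrow> 'a measure) \<Rightarrow> (nat \<Rightarrow> 'a \<Rightarrow> real) \<Rightarrow> (nat \<Rightarrow> real) \<Rightarrow> 'a \<Rightarrow> bool"
  where "cE_ratio_bounded M F X \<alpha> \<omega> \<longleftrightarrow> (\<forall>n\<ge>1. X (n - 1) \<omega> \<noteq> 0 \<longrightarrow>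
      0 \<le> cE M F X n \<omega> / X (n - 1) \<omega> \<and> cE M F X n \<omega> / X (n - 1) \<omega> \<le> 1 + \<alpha> n)"

lemma A1_AE_cE_ratio_bounded: "A1 M F X \<alpha> \<Longrightarrow> AE \<omega> in M. cE_ratio_bounded M F X \<alpha> \<omega>"
  unfolding A1_def cE_ratio_bounded_def by (auto elim!: eventually_mono)

lemma abs_X_le_in_excursion:
  assumes "\<forall>n. \<alpha> n \<ge> 0"
    and ratio: "cE_ratio_bounded M F X \<alpha> \<omega>"
    and "j \<ge> 1" and Ts: "TT X j \<omega> = enat s" and "s \<le> i" and "enat i < TT X (Suc j) \<omega>"
  shows "\<bar>X i \<omega>\<bar> \<le> lam \<alpha> (i - s) i *
           ((\<Sum>k\<in>{s..i}. \<bar>eps M F X k \<omega>\<bar>) + \<bar>UU M F X s \<omega>\<bar>)"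
proof -
  have mean: "\<bar>cE M F X k \<omega>\<bar> \<le> (1 + \<alpha> k) * \<bar>X (k - 1) \<omega>\<bar>"
      "0 \<le> cE M F X k \<omega> * X (k - 1) \<omega>" if "k \<ge> 1" "X (k - 1) \<omega> \<noteq> 0" for k
    using cond_mean_bounds_of_ratio_bounds[of "X (k - 1) \<omega>" "cE M F X k \<omega>" "1 + \<alpha> k"]
      ratio that unfolding cE_ratio_bounded_def by auto
  note s1 = TT_eq_enatD(1)[OF Ts \<open>j \<ge> 1\<close>]
  have "\<bar>X i \<omega>\<bar> \<le> (\<Prod>k\<in>{s+1..i}. 1 + \<alpha> k) *
          ((\<Sum>k\<in>{s..i}. \<bar>eps M F X k \<omega>\<bar>) + \<bar>UU M F X s \<omega>\<bar>)"
  proof (rule abs_le_prod_mult_sum_of_recursion[where x = "\<lambda>k. X k \<omega>"])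
    fix k assume "s < k" "k \<le> i"
    have "\<not> DD X k \<omega>"
      using not_DD_before_next_TT[OF Ts \<open>j \<ge> 1\<close> \<open>s < k\<close>] \<open>k \<le> i\<close> assms(6)
      by (meson enat_ord_simps(1) le_less_trans)
    then have "\<bar>X k \<omega>\<bar> \<le> (1 + \<alpha> k) * \<bar>X (k - 1) \<omega>\<bar> + \<bar>X k \<omega> - cE M F X k \<omega>\<bar>"
      by (rule abs_le_of_not_DD) (use mean(1)[of k] \<open>s < k\<close> assms(1) in auto)
    then show "\<bar>X k \<omega>\<bar> \<le> (1 + \<alpha> k) * \<bar>X (k - 1) \<omega>\<bar> + \<bar>eps M F X k \<omega>\<bar>"
      by (simp add: eps_def)
  next
    show "\<bar>X s \<omega>\<bar> \<le> \<bar>UU M F X s \<omega>\<bar> + \<bar>eps M F X s \<omega>\<bar>"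
      using abs_le_at_DD[OF TT_eq_enatD(3)[OF Ts \<open>j \<ge> 1\<close>]] mean(2)[OF s1]
      by (simp add: UU_def eps_def)
  qed (use assms in auto)
  also have "(\<Prod>k\<in>{s+1..i}. 1 + \<alpha> k) = lam \<alpha> (i - s) i"
    unfolding lam_def using \<open>s \<le> i\<close> by (simp add: Suc_diff_le)
  finally show ?thesis .
qed

lemma WW_le_lam_max_mult:
  assumes "\<forall>n. \<alpha> n \<ge> 0"
    and ratio: "cE_ratio_bounded M F X \<alpha> \<omega>"
    and "j \<ge> 1"
  shows "WW X j \<omega> \<le>
           (if TT X j \<omega> < \<infinity> then
              lam_max \<alpha> * (Mabs (eps M F X) (the_enat (TT X j \<omega>)) (TT X (Suc j) \<omega> - 1) \<omega>
                            + ennreal \<bar>UU M F X (the_enat (TT X j \<omega>)) \<omega>\<bar>)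
            else 0)"
proof (cases "TT X j \<omega>")
  case (enat s)
  define B where "B = Mabs (eps M F X) s (TT X (Suc j) \<omega> - 1) \<omega> + ennreal \<bar>UU M F X s \<omega>\<bar>"
  have "ennreal \<bar>X i \<omega>\<bar> \<le> lam_max \<alpha> * B" if "s \<le> i" "enat i < TT X (Suc j) \<omega>" for i
  proof -
    have lam0: "0 \<le> lam \<alpha> (i - s) i"
      unfolding lam_def using assms(1) by (intro prod_nonneg) (simp add: add_nonneg_nonneg)
    have "ennreal \<bar>X i \<omega>\<bar> \<le> ennreal (lam \<alpha> (i - s) i *
          ((\<Sum>k\<in>{s..i}. \<bar>eps M F X k \<omega>\<bar>) + \<bar>UU M F X s \<omega>\<bar>))"
      using abs_X_le_in_excursion[OF assms enat that] by (rule ennreal_leI)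
    also have "\<dots> = ennreal (lam \<alpha> (i - s) i) *
          (ennreal (\<Sum>k\<in>{s..i}. \<bar>eps M F X k \<omega>\<bar>) + ennreal \<bar>UU M F X s \<omega>\<bar>)"
      using lam0 by (simp add: ennreal_mult sum_nonneg)
    also have "\<dots> \<le> lam_max \<alpha> * B"
      unfolding B_def using lam_le_lam_max[of "i - s" i \<alpha>]
        sum_abs_le_Mabs[OF enat_le_minus_one_of_less[OF that(2)], where s = s and e = "eps M F X"]
      by (intro mult_mono add_right_mono) auto
    finally show ?thesis .
  qed
  then show ?thesis
    unfolding WW_def B_def using enat by (auto intro!: SUP_least)
qed (simp add: WW_def)

theorem lemmaA2:
  fixes M :: "'a measure" and F :: "nat \<Rightarrow> 'a measure" and X :: "nat \<Rightarrow> 'a \<Rightarrow> real"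
    and \<alpha> :: "nat \<Rightarrow> real" and j :: nat
  assumes "prob_space M"
    and "\<And>n. subalgebra M (F n)"
    and "\<And>n. sets (F n) \<subseteq> sets (F (Suc n))"
    and "\<And>n. X n \<in> borel_measurable (F n)"
    and "\<And>n. integrable M (X n)"
    and "A1 M F X \<alpha>"
    and "j \<ge> 1"
  shows "AE \<omega> in M. WW X j \<omega> \<le>
           (if TT X j \<omega> < \<infinity> then
              lam_max \<alpha> * (Mabs (eps M F X) (the_enat (TT X j \<omega>)) (TT X (Suc j) \<omega> - 1) \<omega>
                            + ennreal \<bar>UU M F X (the_enat (TT X j \<omega>)) \<omega>\<bar>)
            else 0)"
proof -
  have \<alpha>_nonneg: "\<forall>n. \<alpha> n \<ge> 0" using assms(6) unfolding A1_def by simp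
  from A1_AE_cE_ratio_bounded[OF assms(6)] show ?thesis
    by (rule eventually_mono) (rule WW_le_lam_max_mult[OF \<alpha>_nonneg _ assms(7)])
qed

end
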